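(* For all $\lambda\in[0,1]$, all $x,x'\in\{0,1\}^{2n}$ and all $z,z'\in\{0,1\}^{2n}$ of Hamming weight $n$, $$\,{}_V\langle x',z'|\bigl(H_{\rm circuit}(\lambda)-\sqrt{1-\lambda^2}\,I\bigr)|x,z\rangle_V=2\,\delta_{x',x}\,\langle z'|H_{\rm XXZ}(\lambda)|z\rangle ,$$ and $S_{\rm string}$ is invariant under $H_{\rm circuit}(\lambda)$.
   Context: Grid. Fix $n\ge1$. Vertices $(i,j)$, $i,j\in\{0,\dots,n\}$. The edge $(i,j,x)$ ($x\in\{0,1\}$) joins $(i,j)$ to $(i+1-x,j+x)$ whenever the latter is a vertex; it lies on line $w=i+j+1$ and has horizontal coordinate $t=n+j-i+x$. $E_w$ = edges on line $w$. $\mathcal H=\bigotimes_{w=1}^{2n}(\mathbb C^{E_w}\otimes\mathbb C^2)$ with basis $|e,\alpha\rangle_w$; $n_{e,\alpha}=|e,\alpha\rangle\langle e,\alpha|_w$, $N_e=n_{e,0}+n_{e,1}$. Strings: for $z\in\{0,1\}^{2n}$ of weight $n$, $v_0=(0,0)$, $v_s=(\#\{k\le s:z_k=0\},\#\{k\le s:z_k=1\})$, $e_s(z)=(i,j,z_s)$ with $(i,j)=v_{s-1}$; $|x\rangle|z\rangle=\bigotimes_w|e_w(z),x_w\rangle_w$; $S_{\rm string}$ is their span. Plaquette $p=(i,j)$, $i,j\in\{0,\dots,n-1\}$: $w_p=i+j+1$, $t_p=n+j-i$, left edges $e_1=(i,j,0)$, $e_2=(i+1,j,1)$, right edges $e_3=(i,j,1)$,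 $e_4=(i,j+1,0)$, arbitrary two-qubit unitary $U_p$ on qubits $(w_p,w_p+1)$. $H^p_{\rm prop}=-\sum_{\alpha,\beta,\gamma,\delta}\langle\beta\delta|U_p|\alpha\gamma\rangle|e_3,\beta\rangle\langle e_1,\alpha|_{w_p}\otimes|e_4,\delta\rangle\langle e_2,\gamma|_{w_p+1}+\text{h.c.}$, $H^p_{\rm gate}(\lambda)=N_{e_1}N_{e_2}+N_{e_3}N_{e_4}+\lambda H^p_{\rm prop}$, $H_{\rm init}=N_{(0,0,1)}+N_{(n-1,n,0)}$, $H_{\rm circuit}(\lambda)=\sum_pH^p_{\rm gate}(\lambda)+\sqrt{1-\lambda^2}H_{\rm init}$. Rotated basis: plaquette $p=(i,j)$ lies to the left of string $z$ if $i\ge a$ where $v_{i+j+1}=(a,i+j+1-a)$. $V(z)$ is the product of $U_p$ over plaquettes left of $z$, ordered so that factors with smaller $t_p$ act first (equal-$t_p$ factors act on disjoint qubit pairs). $|x,z\rangle_V=\sum_y\langle y|V(z)|x\rangle|y\rangle|z\rangle$. XXZ chain on $(\mathbb C^2)^{\otimes 2n}$ (Pauli matrices $X,Y,Z$, $Z|0\rangle=|0\rangle$): $H_{\rm XXZ}(\lambda)=\frac14\sqrt{1-\lambda^2}(Z_{2n}-Z_1)-\frac14\sum_{w=1}^{2n-1}\bigl[(Z_wZ_{w+1}-I)+\lambda(X_wX_{w+1}+Y_wY_{w+1})\bigr]$; $\langle z'|H_{\rm XXZ}|z\rangle$ uses the computational basis of $(\mathbb C^2)^{\otimes 2n}$.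 *)

theory Defs
  imports Complex_Main
begin

type_synonym 'a op = "'a \<Rightarrow> 'a \<Rightarrow> complex"  (* A c' c = <c'|A|c> *)
type_synonym 'a vec = "'a \<Rightarrow> complex"

definition mmul :: "'a set \<Rightarrow> 'a op \<Rightarrow> 'a op \<Rightarrow> 'a op" where
  "mmul S A B = (\<lambda>y x. \<Sum>z\<in>S. A y z * B z x)"

definition idop :: "'a op" where
  "idop = (\<lambda>y x. if y = x then 1 else 0)"

definition ket :: "'a \<Rightarrow> 'a vec" where
  "ket c = (\<lambda>c'. if c' = c then 1 else 0)"

definition sandwich :: "'a set \<Rightarrow> 'a vec \<Rightarrow> 'a op \<Rightarrow> 'a vec \<Rightarrow> complex" where
  "sandwich S \<phi> A \<psi> = (\<Sum>c'\<in>S. \<Sum>c\<in>S. cnj (\<phi> c') * A c' c * \<psi> c)"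

definition apply_op :: "'a set \<Rightarrow> 'a op \<Rightarrow> 'a vec \<Rightarrow> 'a vec" where
  "apply_op S A \<psi> = (\<lambda>c'. if c' \<in> S then (\<Sum>c\<in>S. A c' c * \<psi> c) else 0)"

text \<open>Two-qubit unitary: matrix U (out1,out2) (in1,in2); U^dagger U = I and U U^dagger = I.\<close>
definition unitary2 :: "(bool \<times> bool) op \<Rightarrow> bool" where
  "unitary2 U \<longleftrightarrow>
     (\<forall>a b. (\<Sum>k\<in>UNIV. cnj (U k a) * U k b) = (if a = b then 1 else 0)) \<and>
     (\<forall>a b. (\<Sum>k\<in>UNIV. U a k * cnj (U b k)) = (if a = b then 1 else 0))"

section \<open>Qubit register (C^2)^{2n}; bit False = |0>, True = |1>; qubits indexed 1..2n\<close>

definition bits :: "nat \<Rightarrow> (nat \<Rightarrow> bool) set" where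
  "bits n = {x. \<forall>w. x w \<longrightarrow> w \<in> {1..2*n}}"

definition strings :: "nat \<Rightarrow> (nat \<Rightarrow> bool) set" where
  "strings n = {z \<in> bits n. card {k \<in> {1..2*n}. z k} = n}"

definition emb1 :: "nat \<Rightarrow> bool op \<Rightarrow> (nat \<Rightarrow> bool) op" where
  "emb1 w A = (\<lambda>y x. if (\<forall>v. v \<noteq> w \<longrightarrow> y v = x v) then A (y w) (x w) else 0)"

definition gate2 :: "nat \<Rightarrow> (bool \<times> bool) op \<Rightarrow> (nat \<Rightarrow> bool) op" where
  "gate2 w U = (\<lambda>y x. if (\<forall>v. v \<noteq> w \<and> v \<noteq> Suc w \<longrightarrow> y v = x v)
                       then U (y w, y (Suc w)) (x w, x (Suc w)) else 0)"

definition pX :: "bool op" where "pX = (\<lambda>b a. if b \<noteq> a then 1 else 0)"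
definition pY :: "bool op" where
  "pY = (\<lambda>b a. if b = True \<and> a = False then \<i> else if b = False \<and> a = True then - \<i> else 0)"
definition pZ :: "bool op" where "pZ = (\<lambda>b a. if b = a then (if a then -1 else 1) else 0)"

definition Hxxz :: "nat \<Rightarrow> real \<Rightarrow> (nat \<Rightarrow> bool) op" where
  "Hxxz n lam = (\<lambda>y x.
     (1/4) * complex_of_real (sqrt (1 - lam\<^sup>2)) * (emb1 (2*n) pZ y x - emb1 1 pZ y x)
     - (1/4) * (\<Sum>w\<in>{1..<2*n}.
          (mmul (bits n) (emb1 w pZ) (emb1 (Suc w) pZ) y x - idop y x)
          + complex_of_real lam * (mmul (bits n) (emb1 w pX) (emb1 (Suc w) pX) y x
                                 + mmul (bits n) (emb1 w pY) (emb1 (Suc w) pY) y x)))"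

type_synonym edge = "nat \<times> nat \<times> bool"
type_synonym cfg = "nat \<Rightarrow> edge \<times> bool"   (* line w |-> |e,alpha>_w *)

definition is_edge :: "nat \<Rightarrow> edge \<Rightarrow> bool" where
  "is_edge n e = (case e of (i,j,x) \<Rightarrow>
      i \<le> n \<and> j \<le> n \<and> i + 1 - of_bool x \<le> n \<and> j + of_bool x \<le> n)"

definition eline :: "edge \<Rightarrow> nat" where
  "eline e = (case e of (i,j,x) \<Rightarrow> i + j + 1)"

definition etcoord :: "nat \<Rightarrow> edge \<Rightarrow> nat" where
  "etcoord n e = (case e of (i,j,x) \<Rightarrow> n + j - i + of_bool x)"

definition E :: "nat \<Rightarrow> nat \<Rightarrow> edge set" where
  "E n w = {e. is_edge n e \<and> eline e = w}"

definition cfg_default :: "edge \<times> bool" where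
  "cfg_default = ((0,0,False), False)"

definition cfgs :: "nat \<Rightarrow> cfg set" where
  "cfgs n = {c. (\<forall>w\<in>{1..2*n}. fst (c w) \<in> E n w) \<and> (\<forall>w. w \<notin> {1..2*n} \<longrightarrow> c w = cfg_default)}"

definition nop :: "edge \<Rightarrow> bool \<Rightarrow> cfg op" where
  "nop e a = (\<lambda>c' c. if c' = c \<and> c (eline e) = (e, a) then 1 else 0)"

definition Nop :: "edge \<Rightarrow> cfg op" where
  "Nop e = (\<lambda>c' c. nop e False c' c + nop e True c' c)"

definition trans2 :: "nat \<Rightarrow> edge \<times> bool \<Rightarrow> edge \<times> bool \<Rightarrow> edge \<times> bool \<Rightarrow> edge \<times> bool \<Rightarrow> cfg op" where
  "trans2 w out1 in1 out2 in2 = (\<lambda>c' c.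
     if c w = in1 \<and> c (Suc w) = in2 \<and> c' w = out1 \<and> c' (Suc w) = out2 \<and>
        (\<forall>v. v \<noteq> w \<and> v \<noteq> Suc w \<longrightarrow> c' v = c v) then 1 else 0)"

definition plaqs :: "nat \<Rightarrow> (nat \<times> nat) set" where
  "plaqs n = {0..<n} \<times> {0..<n}"

definition pw :: "nat \<times> nat \<Rightarrow> nat" where "pw p = fst p + snd p + 1"
definition pt :: "nat \<Rightarrow> nat \<times> nat \<Rightarrow> nat" where "pt n p = n + snd p - fst p"

definition pe1 :: "nat \<times> nat \<Rightarrow> edge" where "pe1 p = (fst p, snd p, False)"
definition pe2 :: "nat \<times> nat \<Rightarrow> edge" where "pe2 p = (Suc (fst p), snd p, True)"
definition pe3 :: "nat \<times> nat \<Rightarrow> edge" where "pe3 p = (fst p, snd p, True)"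
definition pe4 :: "nat \<times> nat \<Rightarrow> edge" where "pe4 p = (fst p, Suc (snd p), False)"

definition Hprop :: "(bool \<times> bool) op \<Rightarrow> nat \<times> nat \<Rightarrow> cfg op" where
  "Hprop Up p = (let A = (\<lambda>c' c. - (\<Sum>(\<alpha>,\<beta>,\<gamma>,\<delta>)\<in>(UNIV::(bool\<times>bool\<times>bool\<times>bool) set).
                    Up (\<beta>,\<delta>) (\<alpha>,\<gamma>) *
                    trans2 (pw p) (pe3 p, \<beta>) (pe1 p, \<alpha>) (pe4 p, \<delta>) (pe2 p, \<gamma>) c' c))
                 in (\<lambda>c' c. A c' c + cnj (A c c')))"

definition Hgate :: "nat \<Rightarrow> real \<Rightarrow> (bool \<times> bool) op \<Rightarrow> nat \<times> nat \<Rightarrow> cfg op" where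
  "Hgate n lam Up p = (\<lambda>c' c.
      mmul (cfgs n) (Nop (pe1 p)) (Nop (pe2 p)) c' c
    + mmul (cfgs n) (Nop (pe3 p)) (Nop (pe4 p)) c' c
    + complex_of_real lam * Hprop Up p c' c)"

definition Hinit :: "nat \<Rightarrow> cfg op" where
  "Hinit n = (\<lambda>c' c. Nop (0,0,True) c' c + Nop (n - 1, n, False) c' c)"

definition Hcircuit :: "nat \<Rightarrow> real \<Rightarrow> (nat \<times> nat \<Rightarrow> (bool \<times> bool) op) \<Rightarrow> cfg op" where
  "Hcircuit n lam U = (\<lambda>c' c. (\<Sum>p\<in>plaqs n. Hgate n lam (U p) p c' c)
                              + complex_of_real (sqrt (1 - lam\<^sup>2)) * Hinit n c' c)"

definition vpos :: "(nat \<Rightarrow> bool) \<Rightarrow> nat \<Rightarrow> nat \<times> nat" where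
  "vpos z s = (card {k \<in> {1..s}. \<not> z k}, card {k \<in> {1..s}. z k})"

definition estr :: "(nat \<Rightarrow> bool) \<Rightarrow> nat \<Rightarrow> edge" where
  "estr z s = (fst (vpos z (s - 1)), snd (vpos z (s - 1)), z s)"

definition strcfg :: "nat \<Rightarrow> (nat \<Rightarrow> bool) \<Rightarrow> (nat \<Rightarrow> bool) \<Rightarrow> cfg" where
  "strcfg n x z = (\<lambda>w. if w \<in> {1..2*n} then (estr z w, x w) else cfg_default)"

definition Sstring :: "nat \<Rightarrow> cfg vec set" where
  "Sstring n = {\<psi>. \<exists>a. \<psi> = (\<lambda>c. \<Sum>(x,z)\<in>bits n \<times> strings n. a x z * ket (strcfg n x z) c)}"

definition leftof :: "(nat \<Rightarrow> bool) \<Rightarrow> nat \<times> nat \<Rightarrow> bool" where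
  "leftof z p = (fst p \<ge> fst (vpos z (pw p)))"

text \<open>All plaquettes listed by increasing t_p (ties: disjoint qubit pairs, order irrelevant).\<close>
definition plaq_list :: "nat \<Rightarrow> (nat \<times> nat) list" where
  "plaq_list n = concat (map (\<lambda>t. concat (map (\<lambda>i. map (\<lambda>j. (i,j))
        (filter (\<lambda>j. n + j - i = t) [0..<n])) [0..<n])) [0..<2*n])"

text \<open>V(z): factors earlier in the list act first (are multiplied on the right).\<close>
definition Vz :: "nat \<Rightarrow> (nat \<times> nat \<Rightarrow> (bool \<times> bool) op) \<Rightarrow> (nat \<Rightarrow> bool) \<Rightarrow> (nat \<Rightarrow> bool) op" where
  "Vz n U z = foldl (\<lambda>M p. mmul (bits n) (gate2 (pw p) (U p)) M) idop
                    (filter (leftof z) (plaq_list n))"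

definition rvec :: "nat \<Rightarrow> (nat \<times> nat \<Rightarrow> (bool \<times> bool) op) \<Rightarrow> (nat \<Rightarrow> bool) \<Rightarrow> (nat \<Rightarrow> bool) \<Rightarrow> cfg vec" where
  "rvec n U x z = (\<lambda>c. \<Sum>y\<in>bits n. Vz n U z y x * ket (strcfg n y z) c)"

end

theory Submission
  imports Defs "HOL-Library.FuncSet"
begin

(*
  Applied to strcfg n y z, every plaquette
     term either vanishes, contributes the diagonal constant 1, or moves the
     string across that plaquette -- the flip of two adjacent letters
     z_w z_{w+1} -- while applying U_p or its adjoint to the qubits w, w+1.
     Hence H_circuit maps string configurations into their span, which gives
     the invariance of S_string (Hcircuit_preserves_Sstring).
  2. Rotation (Vz_flip).  If flipping z at w puts the plaquette p to the left of
     the string, then V(flip z) = U_p V(z) on the qubit register.  Together with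
     unitarity of all V(z), conjugating the column formula by the rotations
     reduces every hop to -delta_{x',x} and the diagonal part to delta_{x',x}
     times the string energy (number of corners plus boundary penalties) minus
     sqrt(1-lambda^2) (rotated_entry).
  3. The computational-basis entries of H_XXZ (Hxxz_entry) are exactly half of
     the numbers obtained in step 2, which proves the main theorem.
*)

section \<open>Matrices on a finite basis\<close>

lemma sum_single:
  assumes "finite S" "\<And>x. x \<in> S \<Longrightarrow> x \<noteq> a \<Longrightarrow> f x = 0"
  shows "sum f S = (if a \<in> S then f a else (0::'b::comm_monoid_add))"
proof (cases "a \<in> S")
  case True
  then show ?thesis using assms by (simp add: sum.remove)
next
  case False
  then show ?thesis using assms by (metis (mono_tags) sum.neutral)
qed

lemma mmul_assoc: "finite B \<Longrightarrow> mmul B (mmul B A M) N = mmul B A (mmul B M N)"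
  unfolding mmul_def
  by (auto simp: fun_eq_iff sum_distrib_left sum_distrib_right mult.assoc intro: sum.swap)

definition unitary_on :: "'a set \<Rightarrow> 'a op \<Rightarrow> bool" where
  "unitary_on B M \<longleftrightarrow>
     (\<forall>x\<in>B. \<forall>x'\<in>B. (\<Sum>y\<in>B. cnj (M y x') * M y x) = (if x' = x then 1 else 0))"

text \<open>Equality of two matrices on the block B \<times> B; products over B only see this block.\<close>
definition op_eq_on :: "'a set \<Rightarrow> 'a op \<Rightarrow> 'a op \<Rightarrow> bool" where
  "op_eq_on B M N \<longleftrightarrow> (\<forall>y\<in>B. \<forall>x\<in>B. M y x = N y x)"

lemma op_eq_on_trans: "op_eq_on B M N \<Longrightarrow> op_eq_on B N P \<Longrightarrow> op_eq_on B M P"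
  by (auto simp: op_eq_on_def)

lemma op_eq_on_mmul_right: "op_eq_on B M N \<Longrightarrow> op_eq_on B (mmul B A M) (mmul B A N)"
  unfolding op_eq_on_def mmul_def by simp

lemma op_eq_on_mmul_left: "op_eq_on B A A' \<Longrightarrow> op_eq_on B (mmul B A M) (mmul B A' M)"
  unfolding op_eq_on_def mmul_def by simp

lemma unitary_on_idop: "finite B \<Longrightarrow> unitary_on B idop"
  unfolding unitary_on_def
proof (intro ballI)
  fix x x' assume "finite B" "x \<in> B" "x' \<in> B"
  then show "(\<Sum>y\<in>B. cnj (idop y x') * idop y x) = (if x' = x then 1 else 0)"
    by (subst sum_single[where a = x]) (auto simp: idop_def)
qed

text \<open>Products of unitaries are unitary: adj(G M) (G M) = adj M (adj G G) M = adj M M.\<close>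
lemma unitary_on_mmul:
  assumes B: "finite B" and G: "unitary_on B G" and M: "unitary_on B M"
  shows "unitary_on B (mmul B G M)"
  unfolding unitary_on_def
proof (intro ballI)
  fix x x' assume x: "x \<in> B" "x' \<in> B"
  have "(\<Sum>y\<in>B. cnj (mmul B G M y x') * mmul B G M y x)
      = (\<Sum>y\<in>B. \<Sum>k\<in>B. \<Sum>l\<in>B. cnj (M k x') * M l x * (cnj (G y k) * G y l))"
    unfolding mmul_def
    by (intro sum.cong refl) (simp add: sum_product mult_ac, rule sum.swap)
  also have "\<dots> = (\<Sum>k\<in>B. \<Sum>l\<in>B. \<Sum>y\<in>B. cnj (M k x') * M l x * (cnj (G y k) * G y l))"
    by (subst sum.swap) (rule sum.cong[OF refl], rule sum.swap)
  also have "\<dots> = (\<Sum>k\<in>B. \<Sum>l\<in>B. cnj (M k x') * M l x * (if k = l then 1 else 0))"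
    using G unfolding unitary_on_def by (intro sum.cong refl) (simp add: sum_distrib_left[symmetric])
  also have "\<dots> = (\<Sum>k\<in>B. cnj (M k x') * M k x)"
    using B by (intro sum.cong refl) (subst sum_single, auto)
  also have "\<dots> = (if x' = x then 1 else 0)" using M x unfolding unitary_on_def by simp
  finally show "(\<Sum>y\<in>B. cnj (mmul B G M y x') * mmul B G M y x) = (if x' = x then 1 else 0)" .
qed

definition matrix_elem :: "'a set \<Rightarrow> 'a op \<Rightarrow> 'a op \<Rightarrow> 'a op \<Rightarrow> 'a \<Rightarrow> 'a \<Rightarrow> complex" where
  "matrix_elem B W A V x' x = (\<Sum>y'\<in>B. \<Sum>y\<in>B. cnj (W y' x') * A y' y * V y x)"

lemma matrix_elem_lincomb:
  "matrix_elem B W (\<lambda>y' y. a * A y' y + (\<Sum>i\<in>I. b i * C i y' y)) V x' x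
   = a * matrix_elem B W A V x' x + (\<Sum>i\<in>I. b i * matrix_elem B W (C i) V x' x)"
proof -
  have "matrix_elem B W (\<lambda>y' y. a * A y' y + (\<Sum>i\<in>I. b i * C i y' y)) V x' x
      = a * matrix_elem B W A V x' x
        + (\<Sum>y'\<in>B. \<Sum>y\<in>B. \<Sum>i\<in>I. b i * (cnj (W y' x') * C i y' y * V y x))"
    unfolding matrix_elem_def
    by (simp add: algebra_simps sum.distrib sum_distrib_left sum_distrib_right)
  also have "(\<Sum>y'\<in>B. \<Sum>y\<in>B. \<Sum>i\<in>I. b i * (cnj (W y' x') * C i y' y * V y x))
      = (\<Sum>i\<in>I. b i * matrix_elem B W (C i) V x' x)"
    unfolding matrix_elem_def sum_distrib_left
    by (subst sum.swap) (rule sum.cong[OF refl], rule sum.swap)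
  finally show ?thesis .
qed

lemma matrix_elem_cong:
  "(\<And>y' y. y' \<in> B \<Longrightarrow> y \<in> B \<Longrightarrow> A y' y = A' y' y)
   \<Longrightarrow> matrix_elem B W A V x' x = matrix_elem B W A' V x' x"
  by (simp add: matrix_elem_def)

lemma matrix_elem_uminus:
  "matrix_elem B W (\<lambda>y' y. - A y' y) V x' x = - matrix_elem B W A V x' x"
  by (simp add: matrix_elem_def sum_negf)

lemma matrix_elem_idop:
  assumes "finite B" "unitary_on B V" "x \<in> B" "x' \<in> B"
  shows "matrix_elem B V idop V x' x = (if x' = x then 1 else 0)"
proof -
  have "matrix_elem B V idop V x' x = (\<Sum>y'\<in>B. cnj (V y' x') * V y' x)"
    unfolding matrix_elem_def
    by (intro sum.cong refl) (subst sum_single, auto simp: idop_def assms(1))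
  then show ?thesis using assms(2-4) by (simp add: unitary_on_def)
qed

text \<open>If W = G V on B, then adj W * G * V = adj W * W = I.\<close>
lemma matrix_elem_gate:
  assumes "unitary_on B W" "op_eq_on B W (mmul B G V)" "x \<in> B" "x' \<in> B"
  shows "matrix_elem B W G V x' x = (if x' = x then 1 else 0)"
proof -
  have "matrix_elem B W G V x' x = (\<Sum>y'\<in>B. cnj (W y' x') * mmul B G V y' x)"
    unfolding matrix_elem_def mmul_def by (simp add: sum_distrib_left mult.assoc)
  also have "\<dots> = (\<Sum>y'\<in>B. cnj (W y' x') * W y' x)"
    using assms(2,3) by (simp add: op_eq_on_def)
  finally show ?thesis using assms(1,3,4) by (simp add: unitary_on_def)
qed

text \<open>If V = G W on B, then adj W * adj G * V = adj V * V = I.\<close>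
lemma matrix_elem_gate_adj:
  assumes "unitary_on B V" "op_eq_on B V (mmul B G W)" "x \<in> B" "x' \<in> B"
  shows "matrix_elem B W (\<lambda>y' y. cnj (G y y')) V x' x = (if x' = x then 1 else 0)"
proof -
  have "matrix_elem B W (\<lambda>y' y. cnj (G y y')) V x' x
      = (\<Sum>y\<in>B. \<Sum>y'\<in>B. cnj (G y y' * W y' x') * V y x)"
    unfolding matrix_elem_def by (subst sum.swap) (simp add: mult_ac)
  also have "\<dots> = (\<Sum>y\<in>B. cnj (mmul B G W y x') * V y x)"
    by (simp add: mmul_def sum_distrib_right)
  also have "\<dots> = (\<Sum>y\<in>B. cnj (V y x') * V y x)"
    using assms(2,4) by (simp add: op_eq_on_def)
  finally show ?thesis using assms(1,3,4) by (simp add: unitary_on_def)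
qed

lemma sum_ket_pair:
  assumes "finite C" "\<And>y. y \<in> Y \<Longrightarrow> g y \<in> C"
  shows "(\<Sum>c\<in>C. (\<Sum>y\<in>Y. a y * ket (g y) c) * h c) = (\<Sum>y\<in>Y. a y * h (g y))"
proof -
  have "(\<Sum>c\<in>C. (\<Sum>y\<in>Y. a y * ket (g y) c) * h c) = (\<Sum>y\<in>Y. \<Sum>c\<in>C. a y * (ket (g y) c * h c))"
    by (subst sum.swap) (simp add: sum_distrib_right mult.assoc)
  also have "\<dots> = (\<Sum>y\<in>Y. a y * h (g y))"
  proof (rule sum.cong[OF refl])
    fix y assume y: "y \<in> Y"
    show "(\<Sum>c\<in>C. a y * (ket (g y) c * h c)) = a y * h (g y)"
      by (subst sum_single[where a = "g y"]) (auto simp: assms y ket_def)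
  qed
  finally show ?thesis .
qed

lemma sandwich_combinations:
  assumes "finite C" "\<And>y. y \<in> Y \<Longrightarrow> g y \<in> C" "\<And>y. y \<in> Y' \<Longrightarrow> g' y \<in> C"
  shows "sandwich C (\<lambda>c. \<Sum>y\<in>Y'. a' y * ket (g' y) c) A (\<lambda>c. \<Sum>y\<in>Y. a y * ket (g y) c)
     = (\<Sum>y'\<in>Y'. \<Sum>y\<in>Y. cnj (a' y') * A (g' y') (g y) * a y)"
proof -
  have cnj_ket: "cnj (ket e c') = ket e c'" for e c' by (simp add: ket_def)
  have cnj_sum: "cnj (\<Sum>y\<in>Y'. a' y * ket (g' y) c') = (\<Sum>y'\<in>Y'. cnj (a' y') * ket (g' y') c')"
    for c' by (simp add: cnj_ket)
  have "sandwich C (\<lambda>c. \<Sum>y\<in>Y'. a' y * ket (g' y) c) A (\<lambda>c. \<Sum>y\<in>Y. a y * ket (g y) c)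
     = (\<Sum>c'\<in>C. (\<Sum>y'\<in>Y'. cnj (a' y') * ket (g' y') c') * (\<Sum>c\<in>C. (\<Sum>y\<in>Y. a y * ket (g y) c) * A c' c))"
  proof -
    have "(\<Sum>c\<in>C. P * B c * Q c) = P * (\<Sum>c\<in>C. Q c * B c)" for P and B Q :: "'a \<Rightarrow> complex"
      by (simp add: sum_distrib_left mult_ac)
    then show ?thesis unfolding sandwich_def cnj_sum by (intro sum.cong refl)
  qed
  also have "\<dots> = (\<Sum>c'\<in>C. (\<Sum>y'\<in>Y'. cnj (a' y') * ket (g' y') c') * (\<Sum>y\<in>Y. a y * A c' (g y)))"
    by (simp add: sum_ket_pair[OF assms(1,2)])
  also have "\<dots> = (\<Sum>y'\<in>Y'. cnj (a' y') * (\<Sum>y\<in>Y. a y * A (g' y') (g y)))"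
    by (rule sum_ket_pair[OF assms(1,3)])
  also have "\<dots> = (\<Sum>y'\<in>Y'. \<Sum>y\<in>Y. cnj (a' y') * A (g' y') (g y) * a y)"
    by (simp add: sum_distrib_left mult_ac)
  finally show ?thesis .
qed

lemma bits_eq: "bits n = (\<lambda>A v. v \<in> A) ` Pow {1..2*n}"
proof
  show "bits n \<subseteq> (\<lambda>A v. v \<in> A) ` Pow {1..2*n}"
  proof
    fix x assume x: "x \<in> bits n"
    have "x = (\<lambda>v. v \<in> {w\<in>{1..2*n}. x w})" using x by (auto simp: bits_def)
    then show "x \<in> (\<lambda>A v. v \<in> A) ` Pow {1..2*n}" by blast
  qed
qed (auto simp: bits_def)

lemma finite_bits [simp]: "finite (bits n)"
  by (simp add: bits_eq)

lemma bits_upd2: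
  "y \<in> bits n \<Longrightarrow> 1 \<le> w \<Longrightarrow> Suc w \<le> 2*n \<Longrightarrow> y(w := \<beta>, Suc w := \<delta>) \<in> bits n"
  by (auto simp: bits_def)

lemma unitary_on_gate2:
  assumes U: "unitary2 Uq" and w: "1 \<le> w" "Suc w \<le> 2*n"
  shows "unitary_on (bits n) (gate2 w Uq)"
  unfolding unitary_on_def
proof (intro ballI)
  fix x x' assume x: "x \<in> bits n" "x' \<in> bits n"
  let ?G = "gate2 w Uq"
  let ?f = "\<lambda>(a::bool, b::bool). x(w := a, Suc w := b)"
  let ?h = "\<lambda>y. cnj (?G y x') * ?G y x"
  have inj: "inj ?f"
  proof (rule injI)
    fix k l assume "?f k = ?f l"
    then have "?f k w = ?f l w" "?f k (Suc w) = ?f l (Suc w)" by auto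
    then show "k = l" by (cases k; cases l) auto
  qed
  txt \<open>Only the four register states differing from x at most at w, w+1 contribute.\<close>
  have "(\<Sum>y\<in>bits n. ?h y) = (\<Sum>y\<in>range ?f. ?h y)"
  proof (rule sum.mono_neutral_right)
    show "range ?f \<subseteq> bits n" using x w by (auto intro: bits_upd2)
    show "\<forall>y\<in>bits n - range ?f. ?h y = 0"
    proof
      fix y assume y: "y \<in> bits n - range ?f"
      have "y = ?f (y w, y (Suc w))" if "\<forall>v. v \<noteq> w \<and> v \<noteq> Suc w \<longrightarrow> y v = x v"
        using that by (auto simp: fun_eq_iff)
      then have "\<not> (\<forall>v. v \<noteq> w \<and> v \<noteq> Suc w \<longrightarrow> y v = x v)" using y by blast
      then show "?h y = 0" by (simp add: gate2_def) blast
    qed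
  qed simp
  also have "\<dots> = (\<Sum>k\<in>UNIV. ?h (?f k))" by (simp add: sum.reindex[OF inj])
  also have "\<dots> = (if (\<forall>v. v \<noteq> w \<and> v \<noteq> Suc w \<longrightarrow> x' v = x v) then
      (\<Sum>k\<in>UNIV. cnj (Uq k (x' w, x' (Suc w))) * Uq k (x w, x (Suc w))) else 0)"
  proof -
    define C where "C \<longleftrightarrow> (\<forall>v. v \<noteq> w \<and> v \<noteq> Suc w \<longrightarrow> x' v = x v)"
    have "?h (?f k) = (if C then cnj (Uq k (x' w, x' (Suc w))) * Uq k (x w, x (Suc w)) else 0)" for k
      by (cases k) (auto simp: gate2_def C_def)
    then have "(\<Sum>k\<in>UNIV. ?h (?f k))
        = (\<Sum>k\<in>UNIV. if C then cnj (Uq k (x' w, x' (Suc w))) * Uq k (x w, x (Suc w)) else 0)"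
      by (rule sum.cong[OF refl])
    then show ?thesis unfolding C_def[symmetric] by (cases C) simp_all
  qed
  also have "\<dots> = (if x' = x then 1 else 0)"
    using U unfolding unitary2_def by (auto simp: fun_eq_iff)
  finally show "(\<Sum>y\<in>bits n. ?h y) = (if x' = x then 1 else 0)" .
qed

lemma gate2_mmul_disjoint:
  assumes x: "x \<in> bits n" "y \<in> bits n" and d: "b \<noteq> a" "b \<noteq> Suc a" "a \<noteq> Suc b"
  shows "mmul (bits n) (gate2 a Ua) (gate2 b Ub) y x =
    (if (\<forall>v. v \<noteq> a \<and> v \<noteq> Suc a \<and> v \<noteq> b \<and> v \<noteq> Suc b \<longrightarrow> y v = x v)
     then Ua (y a, y (Suc a)) (x a, x (Suc a)) * Ub (y b, y (Suc b)) (x b, x (Suc b)) else 0)"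
proof -
  define k where "k = (\<lambda>v. if v = a \<or> v = Suc a then x v else y v)"
  have kB: "k \<in> bits n" using x by (auto simp: bits_def k_def)
  have "mmul (bits n) (gate2 a Ua) (gate2 b Ub) y x = gate2 a Ua y k * gate2 b Ub k x"
    unfolding mmul_def
  proof (subst sum_single[where a = k])
    fix l assume "l \<noteq> k"
    moreover have "l = k" if "\<forall>v. v \<noteq> a \<and> v \<noteq> Suc a \<longrightarrow> y v = l v"
      and "\<forall>v. v \<noteq> b \<and> v \<noteq> Suc b \<longrightarrow> l v = x v"
      using that d by (auto simp: k_def fun_eq_iff)
    ultimately have "\<not> (\<forall>v. v \<noteq> a \<and> v \<noteq> Suc a \<longrightarrow> y v = l v) \<or> \<not> (\<forall>v. v \<noteq> b \<and> v \<noteq> Suc b \<longrightarrow> l v = x v)"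
      by blast
    then show "gate2 a Ua y l * gate2 b Ub l x = 0" unfolding gate2_def by auto
  qed (simp_all add: kB)
  also have "\<dots> = (if (\<forall>v. v \<noteq> a \<and> v \<noteq> Suc a \<and> v \<noteq> b \<and> v \<noteq> Suc b \<longrightarrow> y v = x v)
     then Ua (y a, y (Suc a)) (x a, x (Suc a)) * Ub (y b, y (Suc b)) (x b, x (Suc b)) else 0)"
    using d unfolding gate2_def k_def by auto
  finally show ?thesis .
qed

lemma gate2_commute:
  assumes "b \<noteq> a" "b \<noteq> Suc a" "a \<noteq> Suc b"
  shows "op_eq_on (bits n) (mmul (bits n) (gate2 a Ua) (gate2 b Ub))
                           (mmul (bits n) (gate2 b Ub) (gate2 a Ua))"
  unfolding op_eq_on_def
  using assms by (auto simp: gate2_mmul_disjoint conj_ac mult.commute)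

section \<open>Lattice paths\<close>

text \<open>vpos z s is the vertex reached after the first s steps of the path z: step k goes in
  direction i if z k is False and in direction j if z k is True.\<close>

lemma vpos_0 [simp]: "vpos z 0 = (0, 0)"
  by (simp add: vpos_def)

lemma vpos_Suc: "vpos z (Suc s) = (fst (vpos z s) + (if z (Suc s) then 0 else 1),
                                     snd (vpos z s) + (if z (Suc s) then 1 else 0))"
proof -
  have e: "\<And>P. {k \<in> {1..Suc s}. P k} = {k \<in> {1..s}. P k} \<union> (if P (Suc s) then {Suc s} else {})"
    by (auto simp: le_Suc_eq)
  show ?thesis unfolding vpos_def e by (auto simp: card_insert_if)
qed

lemma vpos_sum: "fst (vpos z s) + snd (vpos z s) = s"
  by (induction s) (auto simp: vpos_Suc)

lemma vpos_agree:
  assumes "vpos z a = vpos z' a" "\<And>k. a < k \<Longrightarrow> k \<le> b \<Longrightarrow> z k = z' k" "a \<le> b"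
  shows "vpos z b = vpos z' b"
  using assms(3,2)
proof (induction b rule: dec_induct)
  case base then show ?case using assms(1) by simp
next
  case (step m)
  then show ?case by (simp add: vpos_Suc)
qed

lemma vpos_mono:
  assumes "s \<le> s'"
  shows "fst (vpos z s) \<le> fst (vpos z s')" "snd (vpos z s) \<le> snd (vpos z s')"
  using assms by (induction s' rule: dec_induct) (auto simp: vpos_Suc)

lemma strings_iff: "z \<in> strings n \<longleftrightarrow> z \<in> bits n \<and> snd (vpos z (2*n)) = n"
  by (simp add: strings_def vpos_def)

lemma strings_bits: "z \<in> strings n \<Longrightarrow> z \<in> bits n"
  by (simp add: strings_def)

lemma finite_strings [simp]: "finite (strings n)"
  using finite_subset[OF _ finite_bits] strings_bits by blast

lemma strings_vpos:
  assumes "z \<in> strings n"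
  shows "vpos z (2*n) = (n, n)"
proof -
  have "snd (vpos z (2*n)) = n" using assms by (simp add: strings_iff)
  moreover have "fst (vpos z (2*n)) + snd (vpos z (2*n)) = 2*n" by (rule vpos_sum)
  ultimately show ?thesis by (metis add_right_imp_eq mult_2 prod.collapse)
qed

lemma strings_vpos_le:
  assumes "z \<in> strings n" "s \<le> 2*n"
  shows "fst (vpos z s) \<le> n" "snd (vpos z s) \<le> n"
  using vpos_mono[OF assms(2), of z] strings_vpos[OF assms(1)] by auto

text \<open>Flipping the steps w and w+1 of a path moves it across the plaquette at vpos z (w-1).\<close>
definition flip_at :: "nat \<Rightarrow> (nat \<Rightarrow> bool) \<Rightarrow> nat \<Rightarrow> bool" where
  "flip_at w z = z(w := z (Suc w), Suc w := z w)"

lemma flip_at_apply [simp]: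
  "flip_at w z w = z (Suc w)" "flip_at w z (Suc w) = z w"
  "v \<noteq> w \<Longrightarrow> v \<noteq> Suc w \<Longrightarrow> flip_at w z v = z v"
  by (auto simp: flip_at_def)

lemma flip_at_flip_at [simp]: "flip_at w (flip_at w z) = z"
  by (auto simp: flip_at_def)

lemma flip_at_eq_iff:
  "z' = flip_at w z \<longleftrightarrow>
     (\<forall>v. v \<noteq> w \<and> v \<noteq> Suc w \<longrightarrow> z' v = z v) \<and> z' w = z (Suc w) \<and> z' (Suc w) = z w"
proof
  assume "(\<forall>v. v \<noteq> w \<and> v \<noteq> Suc w \<longrightarrow> z' v = z v) \<and> z' w = z (Suc w) \<and> z' (Suc w) = z w"
  then show "z' = flip_at w z"
    by (intro ext) (metis flip_at_apply)
qed simp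

lemma vpos_flip_at:
  assumes "1 \<le> w" "s \<noteq> w"
  shows "vpos (flip_at w z) s = vpos z s"
proof (cases "s < w")
  case True
  show ?thesis by (rule vpos_agree[of _ 0]) (use True in simp_all)
next
  case False
  then obtain k where k: "w = Suc k" "Suc w \<le> s" using assms by (cases w) auto
  have "vpos (flip_at w z) k = vpos z k" by (rule vpos_agree[of _ 0]) (use k in simp_all)
  then have "vpos (flip_at w z) (Suc w) = vpos z (Suc w)" using k by (simp add: vpos_Suc)
  then show ?thesis by (rule vpos_agree) (use k in simp_all)
qed

lemma flip_at_strings:
  "z \<in> strings n \<Longrightarrow> 1 \<le> w \<Longrightarrow> Suc w \<le> 2*n \<Longrightarrow> flip_at w z \<in> strings n"
proof -
  assume z: "z \<in> strings n" and w: "1 \<le> w" "Suc w \<le> 2*n"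
  then have "flip_at w z \<in> bits n" by (auto simp: strings_def bits_def flip_at_def)
  moreover have "vpos (flip_at w z) (2*n) = vpos z (2*n)" using w by (simp add: vpos_flip_at)
  ultimately show ?thesis using z by (simp add: strings_iff)
qed

lemma finite_E: "finite (E n w)"
proof -
  have "E n w \<subseteq> {0..n} \<times> {0..n} \<times> UNIV" by (auto simp: E_def is_edge_def)
  then show ?thesis by (rule finite_subset) auto
qed

lemma finite_cfgs [simp]: "finite (cfgs n)"
proof -
  let ?F = "\<lambda>f w. if w \<in> {1..2*n} then f w else cfg_default"
  have "cfgs n \<subseteq> ?F ` (PiE {1..2*n} (\<lambda>w. E n w \<times> UNIV))"
  proof
    fix c assume c: "c \<in> cfgs n"
    have "restrict c {1..2*n} \<in> PiE {1..2*n} (\<lambda>w. E n w \<times> UNIV)"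
      using c by (auto simp: cfgs_def mem_Times_iff)
    moreover have "c = ?F (restrict c {1..2*n})" using c by (auto simp: cfgs_def)
    ultimately show "c \<in> ?F ` (PiE {1..2*n} (\<lambda>w. E n w \<times> UNIV))" by blast
  qed
  moreover have "finite (PiE {1..2*n} (\<lambda>w. E n w \<times> (UNIV::bool set)))"
    by (intro finite_PiE) (auto simp: finite_E)
  ultimately show ?thesis by (meson finite_imageI finite_subset)
qed

lemma estr_Suc: "estr z (Suc k) = (fst (vpos z k), snd (vpos z k), z (Suc k))"
  by (simp add: estr_def)

lemma strcfg_line: "w \<in> {1..2*n} \<Longrightarrow> strcfg n y z w = (estr z w, y w)"
  by (simp add: strcfg_def)

lemma estr_E:
  assumes "z \<in> strings n" "w \<in> {1..2*n}"
  shows "estr z w \<in> E n w"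
proof -
  obtain k where k: "w = Suc k" using assms(2) by (cases w) auto
  have le: "fst (vpos z (Suc k)) \<le> n" "snd (vpos z (Suc k)) \<le> n"
    "fst (vpos z k) \<le> n" "snd (vpos z k) \<le> n"
    using strings_vpos_le[OF assms(1)] assms(2) k by auto
  have s: "fst (vpos z k) + snd (vpos z k) = k" by (rule vpos_sum)
  show ?thesis using le s unfolding k
    by (auto simp: E_def is_edge_def eline_def estr_Suc vpos_Suc split: if_splits)
qed

lemma strcfg_cfgs: "z \<in> strings n \<Longrightarrow> strcfg n y z \<in> cfgs n"
  unfolding cfgs_def by (auto simp: strcfg_def estr_E simp del: atLeastAtMost_iff)

lemma strcfg_eq_iff:
  assumes "y \<in> bits n" "y' \<in> bits n" "z \<in> bits n" "z' \<in> bits n"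
  shows "strcfg n y z = strcfg n y' z' \<longleftrightarrow> y = y' \<and> z = z'"
proof
  assume eq: "strcfg n y z = strcfg n y' z'"
  have "y w = y' w \<and> z w = z' w" for w
  proof (cases "w \<in> {1..2*n}")
    case True
    have "strcfg n y z w = strcfg n y' z' w" using eq by simp
    then show ?thesis using True by (simp add: strcfg_line estr_def)
  next
    case False
    then show ?thesis using assms by (auto simp: bits_def)
  qed
  then show "y = y' \<and> z = z'" by auto
qed simp

lemma strcfg_flip_iff:
  assumes w: "1 \<le> w" "Suc w \<le> 2*n"
  shows "(fst (c' w) = estr (flip_at w z) w \<and> fst (c' (Suc w)) = estr (flip_at w z) (Suc w) \<and>
          (\<forall>v. v \<noteq> w \<and> v \<noteq> Suc w \<longrightarrow> c' v = strcfg n y z v))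
     \<longleftrightarrow> (\<exists>\<beta> \<delta>. c' = strcfg n (y(w := \<beta>, Suc w := \<delta>)) (flip_at w z))"
proof -
  have away: "strcfg n y' (flip_at w z) v = strcfg n y z v"
    if "v \<noteq> w" "v \<noteq> Suc w" "\<forall>u. u \<noteq> w \<and> u \<noteq> Suc w \<longrightarrow> y' u = y u" for v y'
  proof (cases "v \<in> {1..2*n}")
    case True
    then obtain k where k: "v = Suc k" by (cases v) auto
    then have "vpos (flip_at w z) k = vpos z k" using that w by (intro vpos_flip_at) auto
    then show ?thesis using True that k by (simp add: strcfg_line estr_Suc)
  next
    case False
    then show ?thesis unfolding strcfg_def by (simp only: if_False)
  qed
  have on_w: "strcfg n y' z' w = (estr z' w, y' w)" "strcfg n y' z' (Suc w) = (estr z' (Suc w), y' (Suc w))"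
    for y' z' using w by (simp_all add: strcfg_line)
  show ?thesis
  proof
    assume h: "fst (c' w) = estr (flip_at w z) w \<and> fst (c' (Suc w)) = estr (flip_at w z) (Suc w) \<and>
          (\<forall>v. v \<noteq> w \<and> v \<noteq> Suc w \<longrightarrow> c' v = strcfg n y z v)"
    have "c' = strcfg n (y(w := snd (c' w), Suc w := snd (c' (Suc w)))) (flip_at w z)"
    proof
      fix v show "c' v = strcfg n (y(w := snd (c' w), Suc w := snd (c' (Suc w)))) (flip_at w z) v"
        using h away[of v] by (cases "v = w \<or> v = Suc w") (auto simp: on_w prod_eq_iff)
    qed
    then show "\<exists>\<beta> \<delta>. c' = strcfg n (y(w := \<beta>, Suc w := \<delta>)) (flip_at w z)" by blast
  qed (use away on_w in auto)
qed

section \<open>The circuit Hamiltonian on a string configuration\<close>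

lemma Nop_eval: "Nop e c' c = (if c' = c \<and> fst (c (eline e)) = e then 1 else 0)"
  by (cases "c (eline e)") (auto simp: Nop_def nop_def)

lemma mmul_Nop:
  assumes "finite C"
  shows "mmul C (Nop e1) (Nop e2) c' c =
    (if c' = c \<and> c \<in> C \<and> fst (c (eline e1)) = e1 \<and> fst (c (eline e2)) = e2 then 1 else 0)"
proof -
  have "mmul C (Nop e1) (Nop e2) c' c = (if c \<in> C then Nop e1 c' c * Nop e2 c c else 0)"
    unfolding mmul_def by (rule sum_single[OF assms]) (auto simp: Nop_eval)
  then show ?thesis by (auto simp: Nop_eval)
qed

lemma trans2_sum:
  "(\<Sum>(\<alpha>,\<beta>,\<gamma>,\<delta>)\<in>(UNIV::(bool\<times>bool\<times>bool\<times>bool) set).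
      g \<alpha> \<beta> \<gamma> \<delta> * trans2 w (e3, \<beta>) (e1, \<alpha>) (e4, \<delta>) (e2, \<gamma>) c' c)
   = (if fst (c w) = e1 \<and> fst (c (Suc w)) = e2 \<and> fst (c' w) = e3 \<and> fst (c' (Suc w)) = e4
         \<and> (\<forall>v. v \<noteq> w \<and> v \<noteq> Suc w \<longrightarrow> c' v = c v)
      then g (snd (c w)) (snd (c' w)) (snd (c (Suc w))) (snd (c' (Suc w))) else 0)"
proof -
  let ?a = "(snd (c w), snd (c' w), snd (c (Suc w)), snd (c' (Suc w)))"
  have "(\<Sum>(\<alpha>,\<beta>,\<gamma>,\<delta>)\<in>(UNIV::(bool\<times>bool\<times>bool\<times>bool) set).
      g \<alpha> \<beta> \<gamma> \<delta> * trans2 w (e3, \<beta>) (e1, \<alpha>) (e4, \<delta>) (e2, \<gamma>) c' c)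
     = (case ?a of (\<alpha>,\<beta>,\<gamma>,\<delta>) \<Rightarrow> g \<alpha> \<beta> \<gamma> \<delta> * trans2 w (e3, \<beta>) (e1, \<alpha>) (e4, \<delta>) (e2, \<gamma>) c' c)"
    by (subst sum_single[where a = ?a]) (auto simp: trans2_def prod_eq_iff split: if_splits)
  then show ?thesis by (auto simp: trans2_def prod_eq_iff)
qed

text \<open>The forward half of H_prop: it moves the string from the left edges e1, e2 of the
  plaquette p to its right edges e3, e4 and applies U_p; H_prop is this plus its adjoint.\<close>
definition Aprop :: "(bool \<times> bool) op \<Rightarrow> nat \<times> nat \<Rightarrow> cfg op" where
  "Aprop Up p c' c = (if fst (c (pw p)) = pe1 p \<and> fst (c (Suc (pw p))) = pe2 p
         \<and> fst (c' (pw p)) = pe3 p \<and> fst (c' (Suc (pw p))) = pe4 p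
         \<and> (\<forall>v. v \<noteq> pw p \<and> v \<noteq> Suc (pw p) \<longrightarrow> c' v = c v)
      then - Up (snd (c' (pw p)), snd (c' (Suc (pw p)))) (snd (c (pw p)), snd (c (Suc (pw p)))) else 0)"

lemma Hprop_eq: "Hprop Up p c' c = Aprop Up p c' c + cnj (Aprop Up p c c')"
proof -
  have "(\<Sum>(\<alpha>,\<beta>,\<gamma>,\<delta>)\<in>(UNIV::(bool\<times>bool\<times>bool\<times>bool) set). Up (\<beta>,\<delta>) (\<alpha>,\<gamma>) *
           trans2 (pw p) (pe3 p, \<beta>) (pe1 p, \<alpha>) (pe4 p, \<delta>) (pe2 p, \<gamma>) c' c)
      = - Aprop Up p c' c" for c' c
    by (subst trans2_sum) (auto simp add: Aprop_def)
  then show ?thesis by (simp add: Hprop_def Let_def)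
qed

lemma plaq_lines:
  assumes "p \<in> plaqs n"
  shows "1 \<le> pw p" "Suc (pw p) \<le> 2*n"
  using assms by (auto simp: plaqs_def pw_def)

lemma eline_pe: "eline (pe1 p) = pw p" "eline (pe2 p) = Suc (pw p)"
  "eline (pe3 p) = pw p" "eline (pe4 p) = Suc (pw p)"
  by (auto simp: eline_def pe1_def pe2_def pe3_def pe4_def pw_def)

lemma string_edges:
  "(estr z (pw p) = pe1 p \<and> estr z (Suc (pw p)) = pe2 p) \<longleftrightarrow>
     vpos z (pw p - 1) = p \<and> \<not> z (pw p) \<and> z (Suc (pw p))"
  "(estr z (pw p) = pe3 p \<and> estr z (Suc (pw p)) = pe4 p) \<longleftrightarrow>
     vpos z (pw p - 1) = p \<and> z (pw p) \<and> \<not> z (Suc (pw p))"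
proof -
  obtain k where k: "pw p = Suc k" by (simp add: pw_def)
  show "(estr z (pw p) = pe1 p \<and> estr z (Suc (pw p)) = pe2 p) \<longleftrightarrow>
     vpos z (pw p - 1) = p \<and> \<not> z (pw p) \<and> z (Suc (pw p))"
    unfolding k estr_Suc by (cases p; cases "vpos z k"; simp add: pe1_def pe2_def vpos_Suc; blast)
  show "(estr z (pw p) = pe3 p \<and> estr z (Suc (pw p)) = pe4 p) \<longleftrightarrow>
     vpos z (pw p - 1) = p \<and> z (pw p) \<and> \<not> z (Suc (pw p))"
    unfolding k estr_Suc by (cases p; cases "vpos z k"; simp add: pe3_def pe4_def vpos_Suc; blast)
qed

lemma string_edges_flip:
  assumes "z (pw p) \<noteq> z (Suc (pw p))"
  shows "vpos (flip_at (pw p) z) (pw p - 1) = p \<longleftrightarrow> vpos z (pw p - 1) = p"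
  by (simp add: vpos_flip_at pw_def)

lemma Aprop_from_strcfg:
  assumes p: "p \<in> plaqs n"
  shows "Aprop Up p c' (strcfg n y z) =
    (if vpos z (pw p - 1) = p \<and> \<not> z (pw p) \<and> z (Suc (pw p)) \<and>
        (\<exists>\<beta> \<delta>. c' = strcfg n (y(pw p := \<beta>, Suc (pw p) := \<delta>)) (flip_at (pw p) z))
     then - Up (snd (c' (pw p)), snd (c' (Suc (pw p)))) (y (pw p), y (Suc (pw p))) else 0)"
proof -
  let ?w = "pw p"
  have w: "1 \<le> ?w" "Suc ?w \<le> 2*n" using plaq_lines[OF p] .
  have at_w: "strcfg n y z ?w = (estr z ?w, y ?w)" "strcfg n y z (Suc ?w) = (estr z (Suc ?w), y (Suc ?w))"
    using w by (simp_all add: strcfg_line)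
  have "estr (flip_at ?w z) ?w = pe3 p \<and> estr (flip_at ?w z) (Suc ?w) = pe4 p"
    if "vpos z (?w - 1) = p \<and> \<not> z ?w \<and> z (Suc ?w)"
    using that string_edges(2)[of "flip_at ?w z" p] string_edges_flip[of z p] by simp
  then show ?thesis
    unfolding Aprop_def at_w using string_edges(1)[of z p] strcfg_flip_iff[OF w, of c' z y]
    by auto
qed

lemma Aprop_to_strcfg:
  assumes p: "p \<in> plaqs n"
  shows "Aprop Up p (strcfg n y z) c' =
    (if vpos z (pw p - 1) = p \<and> z (pw p) \<and> \<not> z (Suc (pw p)) \<and>
        (\<exists>\<beta> \<delta>. c' = strcfg n (y(pw p := \<beta>, Suc (pw p) := \<delta>)) (flip_at (pw p) z))
     then - Up (y (pw p), y (Suc (pw p))) (snd (c' (pw p)), snd (c' (Suc (pw p)))) else 0)"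
proof -
  let ?w = "pw p"
  have w: "1 \<le> ?w" "Suc ?w \<le> 2*n" using plaq_lines[OF p] .
  have at_w: "strcfg n y z ?w = (estr z ?w, y ?w)" "strcfg n y z (Suc ?w) = (estr z (Suc ?w), y (Suc ?w))"
    using w by (simp_all add: strcfg_line)
  have "estr (flip_at ?w z) ?w = pe1 p \<and> estr (flip_at ?w z) (Suc ?w) = pe2 p"
    if "vpos z (?w - 1) = p \<and> z ?w \<and> \<not> z (Suc ?w)"
    using that string_edges(1)[of "flip_at ?w z" p] string_edges_flip[of z p] by simp
  moreover have "(\<forall>v. v \<noteq> ?w \<and> v \<noteq> Suc ?w \<longrightarrow> strcfg n y z v = c' v) \<longleftrightarrow>
                 (\<forall>v. v \<noteq> ?w \<and> v \<noteq> Suc ?w \<longrightarrow> c' v = strcfg n y z v)" by auto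
  ultimately show ?thesis
    unfolding Aprop_def at_w using string_edges(2)[of z p] strcfg_flip_iff[OF w, of c' z y]
    by auto
qed

text \<open>The amplitude (divided by lambda) with which H_circuit moves the string z, carrying
  qubit values y, across the plaquette at vpos z (w-1) by flipping z at w.\<close>
definition hop :: "nat \<Rightarrow> (nat \<times> nat \<Rightarrow> (bool \<times> bool) op) \<Rightarrow> (nat \<Rightarrow> bool) \<Rightarrow> (nat \<Rightarrow> bool) \<Rightarrow> nat \<Rightarrow> cfg \<Rightarrow> complex" where
  "hop n U y z w c' = (if (\<exists>\<beta> \<delta>. c' = strcfg n (y(w := \<beta>, Suc w := \<delta>)) (flip_at w z))
     then (if z w then - cnj (U (vpos z (w - 1)) (y w, y (Suc w)) (snd (c' w), snd (c' (Suc w))))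
           else - U (vpos z (w - 1)) (snd (c' w), snd (c' (Suc w))) (y w, y (Suc w)))
     else 0)"

text \<open>A plaquette term sees the string configuration only if the string passes the corner of p;
  then exactly one of its two penalty terms is 1 and H_prop performs the move.\<close>
lemma Hgate_strcfg:
  assumes p: "p \<in> plaqs n" and z: "z \<in> strings n"
  shows "Hgate n lam (U p) p c' (strcfg n y z) =
    (if vpos z (pw p - 1) = p \<and> z (pw p) \<noteq> z (Suc (pw p))
     then (if c' = strcfg n y z then 1 else 0) + complex_of_real lam * hop n U y z (pw p) c' else 0)"
proof -
  have w: "pw p \<in> {1..2*n}" "Suc (pw p) \<in> {1..2*n}" using plaq_lines[OF p] by auto
  show ?thesis
    unfolding Hgate_def Hprop_eq Aprop_from_strcfg[OF p] Aprop_to_strcfg[OF p]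
      mmul_Nop[OF finite_cfgs] eline_pe
    using string_edges[of z p] strcfg_cfgs[OF z, of y] strcfg_line[OF w(1)] strcfg_line[OF w(2)]
    by (cases "vpos z (pw p - 1) = p"; cases "z (pw p)"; cases "z (Suc (pw p))"; auto simp: hop_def)
qed

lemma pw_vpos: "1 \<le> w \<Longrightarrow> pw (vpos z (w - 1)) = w"
  using vpos_sum[of z "w - 1"] by (simp add: pw_def)

lemma sum_corners:
  assumes z: "z \<in> strings n"
  shows "(\<Sum>p\<in>plaqs n. if vpos z (pw p - 1) = p \<and> z (pw p) \<noteq> z (Suc (pw p)) then h p else 0)
       = (\<Sum>w\<in>{1..<2*n}. if z w \<noteq> z (Suc w) then h (vpos z (w - 1)) else (0::'a::comm_monoid_add))"
proof -
  let ?P = "{p\<in>plaqs n. vpos z (pw p - 1) = p \<and> z (pw p) \<noteq> z (Suc (pw p))}"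
  let ?W = "{w\<in>{1..<2*n}. z w \<noteq> z (Suc w)}"
  have bij: "bij_betw pw ?P ?W"
  proof (rule bij_betw_imageI)
    show "inj_on pw ?P" by (rule inj_onI) auto
    show "pw ` ?P = ?W"
    proof
      show "pw ` ?P \<subseteq> ?W" using plaq_lines by fastforce
      show "?W \<subseteq> pw ` ?P"
      proof
        fix w assume w: "w \<in> ?W"
        then obtain k where k: "w = Suc k" by (cases w) auto
        have "fst (vpos z (Suc w)) \<le> n" "snd (vpos z (Suc w)) \<le> n"
          using strings_vpos_le[OF z, of "Suc w"] w by auto
        then have "vpos z (w - 1) \<in> plaqs n" using w k by (auto simp: plaqs_def mem_Times_iff vpos_Suc)
        then show "w \<in> pw ` ?P" using w pw_vpos[of w z] by (auto intro!: image_eqI[where x = "vpos z (w - 1)"])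
      qed
    qed
  qed
  have "(\<Sum>p\<in>plaqs n. if vpos z (pw p - 1) = p \<and> z (pw p) \<noteq> z (Suc (pw p)) then h p else 0)
      = (\<Sum>p\<in>?P. h p)"
    by (rule sum.inter_filter[symmetric]) (simp add: plaqs_def)
  also have "\<dots> = (\<Sum>p\<in>?P. h (vpos z (pw p - 1)))" by (rule sum.cong) auto
  also have "\<dots> = (\<Sum>w\<in>?W. h (vpos z (w - 1)))"
    by (rule sum.reindex_bij_betw[OF bij])
  also have "\<dots> = (\<Sum>w\<in>{1..<2*n}. if z w \<noteq> z (Suc w) then h (vpos z (w - 1)) else 0)"
    by (rule sum.inter_filter) simp
  finally show ?thesis .
qed

lemma Hinit_strcfg:
  assumes n: "n \<ge> 1" and z: "z \<in> strings n"
  shows "Hinit n c' (strcfg n y z) = (if c' = strcfg n y z then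
           (if z 1 then 1 else 0) + (if z (2*n) then 0 else 1) else 0)"
proof -
  have r: "(1::nat) \<in> {1..2*n}" "2*n \<in> {1..2*n}" using n by auto
  have e1: "eline (0::nat, 0::nat, True) = 1" by (simp add: eline_def)
  have e2: "eline (n - 1, n, False) = 2*n" using n by (simp add: eline_def)
  have first: "fst (strcfg n y z 1) = (0, 0, True) \<longleftrightarrow> z 1"
    using r by (simp add: strcfg_line estr_def)
  obtain m where m: "2*n = Suc m" using n by (cases "2*n") auto
  have "vpos z (Suc m) = (n, n)" using strings_vpos[OF z] m by simp
  then have last: "fst (strcfg n y z (2*n)) = (n - 1, n, False) \<longleftrightarrow> \<not> z (2*n)"
    using r m n by (auto simp: strcfg_line estr_Suc vpos_Suc split: if_splits)
  show ?thesis unfolding Hinit_def Nop_eval e1 e2 first last by auto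
qed

definition string_energy :: "nat \<Rightarrow> real \<Rightarrow> (nat \<Rightarrow> bool) \<Rightarrow> complex" where
  "string_energy n lam z = (\<Sum>w\<in>{1..<2*n}. if z w \<noteq> z (Suc w) then 1 else 0)
      + complex_of_real (sqrt (1 - lam\<^sup>2)) * ((if z 1 then 1 else 0) + (if z (2*n) then 0 else 1))"

lemma Hcircuit_column:
  assumes n: "n \<ge> 1" and z: "z \<in> strings n"
  shows "Hcircuit n lam U c' (strcfg n y z) =
    (if c' = strcfg n y z then string_energy n lam z else 0)
    + complex_of_real lam * (\<Sum>w\<in>{1..<2*n}. if z w \<noteq> z (Suc w) then hop n U y z w c' else 0)"
proof -
  let ?c = "strcfg n y z" and ?d = "\<lambda>w. z w \<noteq> z (Suc w)"
  have "(\<Sum>p\<in>plaqs n. Hgate n lam (U p) p c' ?c)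
     = (\<Sum>p\<in>plaqs n. if vpos z (pw p - 1) = p \<and> z (pw p) \<noteq> z (Suc (pw p))
         then (if c' = ?c then 1 else 0) + complex_of_real lam * hop n U y z (pw p) c' else 0)"
    by (rule sum.cong) (auto simp: Hgate_strcfg z)
  also have "\<dots> = (\<Sum>w\<in>{1..<2*n}. if ?d w
      then (if c' = ?c then 1 else 0) + complex_of_real lam * hop n U y z w c' else 0)"
    unfolding sum_corners[OF z]
  proof (intro sum.cong refl)
    fix w :: nat assume "w \<in> {1..<2*n}"
    then show "(if ?d w then (if c' = ?c then 1 else 0)
                 + complex_of_real lam * hop n U y z (pw (vpos z (w - 1))) c' else 0)
      = (if ?d w then (if c' = ?c then 1 else 0) + complex_of_real lam * hop n U y z w c' else 0)"
      using pw_vpos[of w z] by simp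
  qed
  also have "\<dots> = (if c' = ?c then (\<Sum>w\<in>{1..<2*n}. if ?d w then 1 else 0) else 0)
       + complex_of_real lam * (\<Sum>w\<in>{1..<2*n}. if ?d w then hop n U y z w c' else 0)"
  proof -
    have "(if ?d w then (if c' = ?c then 1 else 0) + complex_of_real lam * hop n U y z w c' else 0)
        = (if c' = ?c then (if ?d w then 1 else 0) else 0)
          + complex_of_real lam * (if ?d w then hop n U y z w c' else 0)" for w
      by simp
    then show ?thesis by (simp add: sum.distrib sum_distrib_left)
  qed
  finally show ?thesis
    unfolding Hcircuit_def Hinit_strcfg[OF n z] string_energy_def by (auto simp: algebra_simps)
qed

section \<open>Invariance of the string subspace\<close>

definition string_cfgs :: "nat \<Rightarrow> cfg set" where
  "string_cfgs n = {strcfg n y z |y z. y \<in> bits n \<and> z \<in> strings n}"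

lemma Sstring_iff: "\<psi> \<in> Sstring n \<longleftrightarrow> (\<forall>c. c \<notin> string_cfgs n \<longrightarrow> \<psi> c = 0)"
proof
  assume "\<psi> \<in> Sstring n"
  then obtain a where a: "\<psi> = (\<lambda>c. \<Sum>(x,z)\<in>bits n \<times> strings n. a x z * ket (strcfg n x z) c)"
    unfolding Sstring_def by blast
  show "\<forall>c. c \<notin> string_cfgs n \<longrightarrow> \<psi> c = 0"
  proof (intro allI impI)
    fix c assume "c \<notin> string_cfgs n"
    then have "ket (strcfg n x z) c = 0" if "(x, z) \<in> bits n \<times> strings n" for x z
      using that by (auto simp: ket_def string_cfgs_def)
    then show "\<psi> c = 0" unfolding a by (intro sum.neutral) auto
  qed
next
  assume supp: "\<forall>c. c \<notin> string_cfgs n \<longrightarrow> \<psi> c = 0"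
  have "\<psi> c = (\<Sum>(x,z)\<in>bits n \<times> strings n. \<psi> (strcfg n x z) * ket (strcfg n x z) c)" for c
  proof (cases "c \<in> string_cfgs n")
    case True
    then obtain y0 z0 where c: "c = strcfg n y0 z0" "y0 \<in> bits n" "z0 \<in> strings n"
      by (auto simp: string_cfgs_def)
    have other: "ket (strcfg n x z) c = 0"
      if "(x, z) \<in> bits n \<times> strings n" "(x, z) \<noteq> (y0, z0)" for x z
      using strcfg_eq_iff[of y0 n x z0 z] that c by (auto simp: strings_bits ket_def)
    have self: "ket (strcfg n y0 z0) c = 1" by (simp add: c ket_def)
    have "(\<Sum>(x,z)\<in>bits n \<times> strings n. \<psi> (strcfg n x z) * ket (strcfg n x z) c)
        = (if (y0, z0) \<in> bits n \<times> strings n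
           then (\<lambda>(x,z). \<psi> (strcfg n x z) * ket (strcfg n x z) c) (y0, z0) else 0)"
    proof (rule sum_single)
      fix p assume "p \<in> bits n \<times> strings n" "p \<noteq> (y0, z0)"
      then show "(case p of (x, z) \<Rightarrow> \<psi> (strcfg n x z) * ket (strcfg n x z) c) = 0"
        using other by (cases p) simp
    qed simp
    then show ?thesis using self c by simp
  next
    case False
    then have "ket (strcfg n x z) c = 0" if "(x, z) \<in> bits n \<times> strings n" for x z
      using that by (auto simp: ket_def string_cfgs_def)
    then show ?thesis using False supp by (simp add: sum.neutral)
  qed
  then show "\<psi> \<in> Sstring n" unfolding Sstring_def
    by (intro CollectI exI[where x = "\<lambda>x z. \<psi> (strcfg n x z)"] ext)
qed

lemma Hcircuit_string_support:
  assumes n: "n \<ge> 1" and z: "z \<in> strings n" and y: "y \<in> bits n"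
    and c': "c' \<notin> string_cfgs n"
  shows "Hcircuit n lam U c' (strcfg n y z) = 0"
proof -
  have hop0: "hop n U y z w c' = 0" if w: "w \<in> {1..<2*n}" for w
  proof -
    have "y(w := \<beta>, Suc w := \<delta>) \<in> bits n" "flip_at w z \<in> strings n" for \<beta> \<delta>
      using bits_upd2[OF y] flip_at_strings[OF z] w by auto
    then have "c' \<noteq> strcfg n (y(w := \<beta>, Suc w := \<delta>)) (flip_at w z)" for \<beta> \<delta>
      using c' unfolding string_cfgs_def by blast
    then show ?thesis by (simp add: hop_def)
  qed
  have "(\<Sum>w\<in>{1..<2*n}. if z w \<noteq> z (Suc w) then hop n U y z w c' else 0) = 0"
    by (rule sum.neutral) (simp add: hop0)
  moreover have "c' \<noteq> strcfg n y z" using c' y z by (auto simp: string_cfgs_def)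
  ultimately show ?thesis unfolding Hcircuit_column[OF n z] by simp
qed

lemma Hcircuit_preserves_Sstring:
  assumes n: "n \<ge> 1" and \<psi>: "\<psi> \<in> Sstring n"
  shows "apply_op (cfgs n) (Hcircuit n lam U) \<psi> \<in> Sstring n"
  unfolding Sstring_iff
proof (intro allI impI)
  fix c' assume c': "c' \<notin> string_cfgs n"
  have "Hcircuit n lam U c' c * \<psi> c = 0" for c
  proof (cases "c \<in> string_cfgs n")
    case True
    then show ?thesis using Hcircuit_string_support[OF n _ _ c'] by (auto simp: string_cfgs_def)
  next
    case False
    then show ?thesis using \<psi> by (simp add: Sstring_iff)
  qed
  then show "apply_op (cfgs n) (Hcircuit n lam U) \<psi> c' = 0"
    unfolding apply_op_def by (simp only: sum.neutral_const if_cancel)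
qed

section \<open>Computational-basis entries of the XXZ chain\<close>

lemma emb1_mmul:
  assumes "x \<in> bits n" "y \<in> bits n"
  shows "mmul (bits n) (emb1 w A) (emb1 (Suc w) A') y x =
    (if (\<forall>v. v \<noteq> w \<and> v \<noteq> Suc w \<longrightarrow> y v = x v) then A (y w) (x w) * A' (y (Suc w)) (x (Suc w)) else 0)"
proof -
  let ?a = "y(w := x w)"
  have a: "?a \<in> bits n" using assms by (auto simp: bits_def)
  have "mmul (bits n) (emb1 w A) (emb1 (Suc w) A') y x = emb1 w A y ?a * emb1 (Suc w) A' ?a x"
    unfolding mmul_def
  proof (subst sum_single[where a = ?a])
    fix k assume "k \<noteq> ?a"
    moreover have "k = ?a" if "\<forall>v. v \<noteq> w \<longrightarrow> y v = k v" "\<forall>v. v \<noteq> Suc w \<longrightarrow> k v = x v"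
    proof
      fix v show "k v = ?a v" using that by (cases "v = w") auto
    qed
    ultimately have "\<not> (\<forall>v. v \<noteq> w \<longrightarrow> y v = k v) \<or> \<not> (\<forall>v. v \<noteq> Suc w \<longrightarrow> k v = x v)" by blast
    then show "emb1 w A y k * emb1 (Suc w) A' k x = 0" unfolding emb1_def by auto
  qed (simp_all add: a)
  also have "\<dots> = (if (\<forall>v. v \<noteq> w \<and> v \<noteq> Suc w \<longrightarrow> y v = x v)
                   then A (y w) (x w) * A' (y (Suc w)) (x (Suc w)) else 0)"
    by (simp add: emb1_def, blast)
  finally show ?thesis .
qed

definition zsign :: "bool \<Rightarrow> complex" where "zsign b = (if b then -1 else 1)"

lemma emb1_Z: "emb1 w pZ z' z = (if z' = z then zsign (z w) else 0)"
  by (auto simp: emb1_def pZ_def zsign_def fun_eq_iff)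

lemma ZZ_entry:
  assumes "z \<in> bits n" "z' \<in> bits n"
  shows "mmul (bits n) (emb1 w pZ) (emb1 (Suc w) pZ) z' z =
         (if z' = z then zsign (z w) * zsign (z (Suc w)) else 0)"
  unfolding emb1_mmul[OF assms] by (auto simp: pZ_def zsign_def fun_eq_iff)

lemma XX_YY_entry:
  assumes "z \<in> bits n" "z' \<in> bits n"
  shows "mmul (bits n) (emb1 w pX) (emb1 (Suc w) pX) z' z
       + mmul (bits n) (emb1 w pY) (emb1 (Suc w) pY) z' z
     = (if z w \<noteq> z (Suc w) \<and> z' = flip_at w z then 2 else 0)"
  unfolding emb1_mmul[OF assms] flip_at_eq_iff
  by (cases "z w"; cases "z (Suc w)"; cases "z' w"; cases "z' (Suc w)"; auto simp: pX_def pY_def)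

lemma Hxxz_entry:
  assumes "z \<in> bits n" "z' \<in> bits n"
  shows "2 * Hxxz n lam z' z =
      (if z' = z then string_energy n lam z - complex_of_real (sqrt (1 - lam\<^sup>2)) else 0)
    - complex_of_real lam * (\<Sum>w\<in>{1..<2*n}. if z w \<noteq> z (Suc w) \<and> z' = flip_at w z then 1 else 0)"
proof -
  let ?d = "\<lambda>w. z w \<noteq> z (Suc w)"
  let ?s = "complex_of_real (sqrt (1 - lam\<^sup>2))"
  let ?term = "\<lambda>w. (mmul (bits n) (emb1 w pZ) (emb1 (Suc w) pZ) z' z - idop z' z)
          + complex_of_real lam * (mmul (bits n) (emb1 w pX) (emb1 (Suc w) pX) z' z
                                 + mmul (bits n) (emb1 w pY) (emb1 (Suc w) pY) z' z)"
  have "?term w = (if z' = z then -2 * (if ?d w then 1 else 0) else 0)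
          + 2 * complex_of_real lam * (if ?d w \<and> z' = flip_at w z then 1 else 0)" for w
    unfolding ZZ_entry[OF assms] XX_YY_entry[OF assms] by (auto simp: idop_def zsign_def)
  then have bonds: "(\<Sum>w\<in>{1..<2*n}. ?term w)
     = (if z' = z then -2 * (\<Sum>w\<in>{1..<2*n}. if ?d w then 1 else 0) else 0)
       + 2 * complex_of_real lam * (\<Sum>w\<in>{1..<2*n}. if ?d w \<and> z' = flip_at w z then 1 else 0)"
    by (simp add: sum.distrib sum_distrib_left)
  have H: "Hxxz n lam z' z = (1/4) * ?s * (emb1 (2*n) pZ z' z - emb1 1 pZ z' z)
                          - (1/4) * (\<Sum>w\<in>{1..<2*n}. ?term w)"
    by (simp add: Hxxz_def)
  show ?thesis unfolding H bonds emb1_Z string_energy_def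
    by (cases "z 1"; cases "z (2*n)"; auto simp: zsign_def algebra_simps)
qed

section \<open>The rotation V(z)\<close>

lemma set_plaq_list: "set (plaq_list n) = plaqs n"
proof -
  have "(i, j) \<in> set (plaq_list n) \<longleftrightarrow> (i, j) \<in> plaqs n" for i j
  proof
    assume "(i, j) \<in> plaqs n"
    then have "n + j - i < 2*n" "i < n" "j < n" by (auto simp: plaqs_def)
    then show "(i, j) \<in> set (plaq_list n)" by (simp add: plaq_list_def image_iff)
  qed (auto simp: plaq_list_def plaqs_def)
  then show ?thesis by auto
qed

lemma distinct_concat_map:
  assumes "distinct xs" "\<And>x. x \<in> set xs \<Longrightarrow> distinct (f x)"
    "\<And>x y. x \<in> set xs \<Longrightarrow> y \<in> set xs \<Longrightarrow> x \<noteq> y \<Longrightarrow> set (f x) \<inter> set (f y) = {}"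
  shows "distinct (concat (map f xs))"
  using assms
proof (induction xs)
  case (Cons a xs)
  then have "set (f a) \<inter> set (f y) = {}" if "y \<in> set xs" for y
    using that by (metis distinct.simps(2) list.set_intros)
  then have "set (f a) \<inter> set (concat (map f xs)) = {}" by auto
  then show ?case using Cons by auto
qed simp

lemma distinct_plaq_list: "distinct (plaq_list n)"
  unfolding plaq_list_def
  by (intro distinct_concat_map) (auto simp: distinct_map inj_on_def)

lemma sorted_concat_map:
  assumes "sorted xs" "\<And>t a. t \<in> set xs \<Longrightarrow> a \<in> set (f t) \<Longrightarrow> key a = (t::nat)"
  shows "sorted (map key (concat (map f xs)))"
  using assms
proof (induction xs)
  case (Cons x xs)
  have "map key (f x) = replicate (length (map key (f x))) x"
    using Cons.prems(2) by (intro replicate_length_same[symmetric]) auto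
  then have "sorted (map key (f x))" by (metis sorted_replicate)
  moreover have "sorted (map key (concat (map f xs)))" using Cons by auto
  moreover have "key a \<le> key b" if "a \<in> set (f x)" "b \<in> set (concat (map f xs))" for a b
    using Cons.prems that by fastforce
  ultimately show ?case by (auto simp: sorted_append)
qed simp

lemma sorted_plaq_list: "sorted (map (pt n) (plaq_list n))"
  unfolding plaq_list_def by (rule sorted_concat_map) (auto simp: pt_def)

abbreviation push_gate :: "nat \<Rightarrow> (nat \<times> nat \<Rightarrow> (bool \<times> bool) op) \<Rightarrow> (nat \<Rightarrow> bool) op \<Rightarrow> nat \<times> nat \<Rightarrow> (nat \<Rightarrow> bool) op" where
  "push_gate n U M p \<equiv> mmul (bits n) (gate2 (pw p) (U p)) M"

lemma foldl_push_gate_cong: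
  "op_eq_on (bits n) M N \<Longrightarrow> op_eq_on (bits n) (foldl (push_gate n U) M qs) (foldl (push_gate n U) N qs)"
  by (induction qs arbitrary: M N) (auto intro: op_eq_on_mmul_right)

lemma foldl_push_gate_unitary:
  "unitary_on (bits n) M \<Longrightarrow> (\<forall>q\<in>set qs. unitary_on (bits n) (gate2 (pw q) (U q)))
   \<Longrightarrow> unitary_on (bits n) (foldl (push_gate n U) M qs)"
  by (induction qs arbitrary: M) (simp_all add: unitary_on_mmul)

lemma foldl_push_gate_commute:
  assumes "\<forall>q\<in>set qs. pw q \<noteq> pw p \<and> pw q \<noteq> Suc (pw p) \<and> pw p \<noteq> Suc (pw q)"
  shows "op_eq_on (bits n) (foldl (push_gate n U) (push_gate n U M p) qs)
                           (push_gate n U (foldl (push_gate n U) M qs) p)"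
  using assms
proof (induction qs arbitrary: M)
  case Nil then show ?case by (simp add: op_eq_on_def)
next
  case (Cons q qs)
  have "op_eq_on (bits n) (mmul (bits n) (gate2 (pw q) (U q)) (gate2 (pw p) (U p)))
                          (mmul (bits n) (gate2 (pw p) (U p)) (gate2 (pw q) (U q)))"
    by (rule gate2_commute) (use Cons.prems in auto)
  then have "op_eq_on (bits n) (push_gate n U (push_gate n U M p) q) (push_gate n U (push_gate n U M q) p)"
    by (simp add: mmul_assoc[symmetric] op_eq_on_mmul_left)
  then have "op_eq_on (bits n) (foldl (push_gate n U) (push_gate n U (push_gate n U M p) q) qs)
                               (foldl (push_gate n U) (push_gate n U (push_gate n U M q) p) qs)"
    by (rule foldl_push_gate_cong)
  moreover have "op_eq_on (bits n) (foldl (push_gate n U) (push_gate n U (push_gate n U M q) p) qs)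
                                   (push_gate n U (foldl (push_gate n U) (push_gate n U M q) qs) p)"
    using Cons by auto
  ultimately show ?case by (auto intro: op_eq_on_trans)
qed

lemma Vz_unitary:
  assumes "\<forall>p\<in>plaqs n. unitary2 (U p)"
  shows "unitary_on (bits n) (Vz n U z)"
  unfolding Vz_def
proof (rule foldl_push_gate_unitary[OF unitary_on_idop[OF finite_bits]], intro ballI)
  fix q assume "q \<in> set (filter (leftof z) (plaq_list n))"
  then have q: "q \<in> plaqs n" using set_plaq_list by auto
  show "unitary_on (bits n) (gate2 (pw q) (U q))"
    using assms q plaq_lines[OF q] by (intro unitary_on_gate2) auto
qed

text \<open>Geometry of a flip with z w = False, z (w+1) = True: the string z runs along the left edges
  e1, e2 of the plaquette p = vpos z (w-1) and the flipped string along its right edges e3, e4;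
  so flipping adds exactly p to the plaquettes to the left of the string.\<close>
lemma flip_corner:
  assumes w: "1 \<le> w" and zw: "\<not> z w" "z (Suc w)"
  defines "p \<equiv> vpos z (w - 1)"
  shows "pw p = w" "vpos z w = (Suc (fst p), snd p)" "vpos z (Suc w) = (Suc (fst p), Suc (snd p))"
    "vpos (flip_at w z) w = (fst p, Suc (snd p))"
proof -
  obtain k where k: "w = Suc k" using w by (cases w) auto
  show "pw p = w" unfolding p_def using w by (rule pw_vpos)
  show v: "vpos z w = (Suc (fst p), snd p)" using zw unfolding k p_def by (simp add: vpos_Suc)
  show "vpos z (Suc w) = (Suc (fst p), Suc (snd p))" using zw v by (simp add: vpos_Suc)
  have "vpos (flip_at w z) k = vpos z k" using k by (simp add: vpos_flip_at)
  then show "vpos (flip_at w z) w = (fst p, Suc (snd p))" using zw unfolding k p_def by (simp add: vpos_Suc)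
qed

lemma leftof_flip:
  assumes w: "1 \<le> w" and zw: "\<not> z w" "z (Suc w)"
  shows "leftof (flip_at w z) q \<longleftrightarrow> leftof z q \<or> q = vpos z (w - 1)"
    and "\<not> leftof z (vpos z (w - 1))"
proof -
  let ?p = "vpos z (w - 1)"
  note corner = flip_corner[OF w zw]
  show "\<not> leftof z ?p" using corner by (simp add: leftof_def)
  show "leftof (flip_at w z) q \<longleftrightarrow> leftof z q \<or> q = ?p"
  proof (cases "pw q = w")
    case True
    then have eq: "q = ?p \<longleftrightarrow> fst q = fst ?p" using corner(1) by (auto simp: pw_def prod_eq_iff)
    have "leftof (flip_at w z) q \<longleftrightarrow> fst ?p \<le> fst q" "leftof z q \<longleftrightarrow> Suc (fst ?p) \<le> fst q"
      using True corner by (simp_all add: leftof_def)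
    then show ?thesis unfolding eq by presburger
  next
    case False
    then have "q \<noteq> ?p" using corner(1) by auto
    moreover have "vpos (flip_at w z) (pw q) = vpos z (pw q)" using False w by (simp add: vpos_flip_at)
    ultimately show ?thesis by (simp add: leftof_def)
  qed
qed

lemma later_gates_disjoint:
  assumes w: "1 \<le> w" and zw: "\<not> z w" "z (Suc w)"
    and p: "p = vpos z (w - 1)" "p \<in> plaqs n" and q: "q \<in> plaqs n" "leftof z q"
    and order: "pt n p \<le> pt n q"
  shows "pw q \<noteq> pw p \<and> pw q \<noteq> Suc (pw p) \<and> pw p \<noteq> Suc (pw q)"
proof -
  note corner = flip_corner[OF w zw, folded p(1)]
  have lq: "fst q \<ge> fst (vpos z (pw q))" using q by (simp add: leftof_def)
  have bounds: "fst p < n" "fst q < n" using p q by (auto simp: plaqs_def)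
  show ?thesis
  proof (intro conjI notI)
    assume "pw q = pw p"
    then show False using lq corner order bounds by (simp add: pw_def pt_def)
  next
    assume "pw q = Suc (pw p)"
    then show False using lq corner order bounds by (simp add: pw_def pt_def)
  next
    assume a: "pw p = Suc (pw q)"
    then have "pw q = w - 1" using corner(1) by simp
    then have "vpos z (pw q) = p" using p(1) by simp
    then show False using a lq order bounds by (simp add: pw_def pt_def)
  qed
qed

lemma Vz_flip:
  assumes z: "z \<in> strings n" and w: "1 \<le> w" "Suc w \<le> 2*n" and zw: "\<not> z w" "z (Suc w)"
  shows "op_eq_on (bits n) (Vz n U (flip_at w z)) (mmul (bits n) (gate2 w (U (vpos z (w - 1)))) (Vz n U z))"
proof -
  define p where "p = vpos z (w - 1)"
  note corner = flip_corner[OF w(1) zw, folded p_def]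
  have pP: "p \<in> plaqs n"
    using strings_vpos_le[OF z, of "Suc w"] w corner(3) by (auto simp: plaqs_def mem_Times_iff)
  then obtain L1 L2 where L: "plaq_list n = L1 @ p # L2"
    using set_plaq_list by (metis split_list)
  have notin: "p \<notin> set L1" "p \<notin> set L2" using distinct_plaq_list[of n] unfolding L by auto
  note lf = leftof_flip[OF w(1) zw, folded p_def]
  have same: "filter (leftof (flip_at w z)) L = filter (leftof z) L" if "p \<notin> set L" for L
    using that lf by (auto intro: filter_cong)
  let ?g = "push_gate n U" and ?A1 = "filter (leftof z) L1" and ?A2 = "filter (leftof z) L2"
  have V': "Vz n U (flip_at w z) = foldl ?g (?g (foldl ?g idop ?A1) p) ?A2"
    unfolding Vz_def L using lf same notin by simp
  have V: "Vz n U z = foldl ?g (foldl ?g idop ?A1) ?A2"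
    unfolding Vz_def L using lf(2) by simp
  have "\<forall>q\<in>set ?A2. pw q \<noteq> pw p \<and> pw q \<noteq> Suc (pw p) \<and> pw p \<noteq> Suc (pw q)"
  proof
    fix q assume q: "q \<in> set ?A2"
    have "sorted (map (pt n) (L1 @ p # L2))" using sorted_plaq_list[of n] unfolding L .
    then have "pt n p \<le> pt n q" using q by (auto simp: sorted_append)
    moreover have "q \<in> plaqs n" using q set_plaq_list[of n] unfolding L by auto
    ultimately show "pw q \<noteq> pw p \<and> pw q \<noteq> Suc (pw p) \<and> pw p \<noteq> Suc (pw q)"
      using later_gates_disjoint[OF w(1) zw p_def pP] q by auto
  qed
  then have "op_eq_on (bits n) (Vz n U (flip_at w z)) (?g (Vz n U z) p)"
    unfolding V' V by (rule foldl_push_gate_commute)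
  then show ?thesis using corner(1) p_def by simp
qed

definition hop_matrix :: "(nat \<times> nat \<Rightarrow> (bool \<times> bool) op) \<Rightarrow> (nat \<Rightarrow> bool) \<Rightarrow> nat \<Rightarrow> (nat \<Rightarrow> bool) op" where
  "hop_matrix U z w = (\<lambda>y' y. if z w then - cnj (gate2 w (U (vpos z (w - 1))) y y')
                               else - gate2 w (U (vpos z (w - 1))) y' y)"

lemma hop_strcfg:
  assumes y: "y \<in> bits n" "y' \<in> bits n" and z: "z \<in> strings n" "z' \<in> strings n"
    and w: "1 \<le> w" "Suc w \<le> 2*n"
  shows "hop n U y z w (strcfg n y' z') = (if z' = flip_at w z then hop_matrix U z w y' y else 0)"
proof -
  have zb: "z' \<in> bits n" "flip_at w z \<in> bits n"
    using z flip_at_strings[OF z(1) w] by (auto simp: strings_bits)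
  have moved: "(\<exists>\<beta> \<delta>. strcfg n y' z' = strcfg n (y(w := \<beta>, Suc w := \<delta>)) (flip_at w z)) \<longleftrightarrow>
        (z' = flip_at w z \<and> (\<forall>v. v \<noteq> w \<and> v \<noteq> Suc w \<longrightarrow> y v = y' v))"
  proof
    assume "\<exists>\<beta> \<delta>. strcfg n y' z' = strcfg n (y(w := \<beta>, Suc w := \<delta>)) (flip_at w z)"
    then show "z' = flip_at w z \<and> (\<forall>v. v \<noteq> w \<and> v \<noteq> Suc w \<longrightarrow> y v = y' v)"
      using strcfg_eq_iff[OF y(2) bits_upd2[OF y(1) w] zb] by auto
  next
    assume a: "z' = flip_at w z \<and> (\<forall>v. v \<noteq> w \<and> v \<noteq> Suc w \<longrightarrow> y v = y' v)"
    then have "y' = y(w := y' w, Suc w := y' (Suc w))" by (auto simp: fun_eq_iff)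
    then show "\<exists>\<beta> \<delta>. strcfg n y' z' = strcfg n (y(w := \<beta>, Suc w := \<delta>)) (flip_at w z)"
      using a by metis
  qed
  have "snd (strcfg n y' z' w) = y' w" "snd (strcfg n y' z' (Suc w)) = y' (Suc w)"
    using w by (simp_all add: strcfg_def)
  then show ?thesis unfolding hop_def moved hop_matrix_def gate2_def by auto
qed

lemma Hcircuit_string_block:
  assumes n: "n \<ge> 1" and y: "y \<in> bits n" "y' \<in> bits n" and z: "z \<in> strings n" "z' \<in> strings n"
  shows "Hcircuit n lam U (strcfg n y' z') (strcfg n y z)
           - complex_of_real (sqrt (1 - lam\<^sup>2)) * idop (strcfg n y' z') (strcfg n y z)
    = (if z' = z then string_energy n lam z - complex_of_real (sqrt (1 - lam\<^sup>2)) else 0) * idop y' y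
      + (\<Sum>w\<in>{1..<2*n}. (if z w \<noteq> z (Suc w) \<and> z' = flip_at w z then complex_of_real lam else 0)
                          * hop_matrix U z w y' y)"
proof -
  have eq: "strcfg n y' z' = strcfg n y z \<longleftrightarrow> y' = y \<and> z' = z"
    using strcfg_eq_iff y z by (simp add: strings_bits)
  have "complex_of_real lam *
          (\<Sum>w\<in>{1..<2*n}. if z w \<noteq> z (Suc w) then hop n U y z w (strcfg n y' z') else 0)
      = (\<Sum>w\<in>{1..<2*n}. (if z w \<noteq> z (Suc w) \<and> z' = flip_at w z then complex_of_real lam else 0)
                          * hop_matrix U z w y' y)"
  proof -
    have "hop n U y z w (strcfg n y' z') = (if z' = flip_at w z then hop_matrix U z w y' y else 0)"
      if "w \<in> {1..<2*n}" for w
      using that by (intro hop_strcfg[OF y z]) auto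
    then show ?thesis unfolding sum_distrib_left by (intro sum.cong refl) auto
  qed
  then show ?thesis unfolding Hcircuit_column[OF n z(1)] by (auto simp: idop_def eq)
qed

lemma matrix_elem_hop:
  assumes U: "\<forall>p\<in>plaqs n. unitary2 (U p)" and x: "x \<in> bits n" "x' \<in> bits n"
    and z: "z \<in> strings n" and w: "1 \<le> w" "Suc w \<le> 2*n" and d: "z w \<noteq> z (Suc w)"
  shows "matrix_elem (bits n) (Vz n U (flip_at w z)) (hop_matrix U z w) (Vz n U z) x' x
         = - (if x' = x then 1 else 0)"
proof -
  let ?G = "gate2 w (U (vpos z (w - 1)))"
  show ?thesis
  proof (cases "z w")
    case False
    then have "op_eq_on (bits n) (Vz n U (flip_at w z)) (mmul (bits n) ?G (Vz n U z))"
      using Vz_flip[OF z w] d by simp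
    moreover have "hop_matrix U z w = (\<lambda>y' y. - ?G y' y)"
      using False by (simp add: hop_matrix_def fun_eq_iff)
    ultimately show ?thesis
      using matrix_elem_gate[OF Vz_unitary[OF U] _ x] by (simp add: matrix_elem_uminus)
  next
    case True
    have fz: "\<not> flip_at w z w" "flip_at w z (Suc w)" using True d by auto
    have "vpos (flip_at w z) (w - 1) = vpos z (w - 1)" using w by (simp add: vpos_flip_at)
    then have "op_eq_on (bits n) (Vz n U z) (mmul (bits n) ?G (Vz n U (flip_at w z)))"
      using Vz_flip[OF flip_at_strings[OF z w] w fz] by simp
    moreover have "hop_matrix U z w = (\<lambda>y' y. - cnj (?G y y'))"
      using True by (simp add: hop_matrix_def fun_eq_iff)
    ultimately show ?thesis
      using matrix_elem_gate_adj[OF Vz_unitary[OF U] _ x] by (simp add: matrix_elem_uminus)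
  qed
qed

lemma rvec_sandwich:
  assumes z: "z \<in> strings n" "z' \<in> strings n"
  shows "sandwich (cfgs n) (rvec n U x' z') K (rvec n U x z)
       = matrix_elem (bits n) (Vz n U z') (\<lambda>y' y. K (strcfg n y' z') (strcfg n y z)) (Vz n U z) x' x"
  unfolding rvec_def matrix_elem_def
  by (rule sandwich_combinations) (auto simp: strcfg_cfgs z)

lemma rotated_entry:
  assumes n: "n \<ge> 1" and U: "\<forall>p\<in>plaqs n. unitary2 (U p)"
    and x: "x \<in> bits n" "x' \<in> bits n" and z: "z \<in> strings n" "z' \<in> strings n"
  shows "sandwich (cfgs n) (rvec n U x' z')
              (\<lambda>c' c. Hcircuit n lam U c' c - complex_of_real (sqrt (1 - lam\<^sup>2)) * idop c' c)
              (rvec n U x z)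
         = 2 * (if x' = x then 1 else 0) * Hxxz n lam z' z"
proof -
  let ?B = "bits n" and ?\<delta> = "if x' = x then 1 else (0::complex)"
  let ?s = "complex_of_real (sqrt (1 - lam\<^sup>2))"
  let ?cond = "\<lambda>w. z w \<noteq> z (Suc w) \<and> z' = flip_at w z"
  let ?diag = "if z' = z then string_energy n lam z - ?s else 0"
  have diag: "?diag * matrix_elem ?B (Vz n U z') idop (Vz n U z) x' x = ?diag * ?\<delta>"
    using matrix_elem_idop[OF finite_bits Vz_unitary[OF U] x] by auto
  have hops: "(\<Sum>w\<in>{1..<2*n}. (if ?cond w then complex_of_real lam else 0)
              * matrix_elem ?B (Vz n U z') (hop_matrix U z w) (Vz n U z) x' x)
            = - complex_of_real lam * ?\<delta> * (\<Sum>w\<in>{1..<2*n}. if ?cond w then 1 else 0)"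
    unfolding sum_distrib_left by (intro sum.cong refl) (use matrix_elem_hop[OF U x z(1)] in auto)
  have "sandwich (cfgs n) (rvec n U x' z')
          (\<lambda>c' c. Hcircuit n lam U c' c - ?s * idop c' c) (rvec n U x z)
      = ?diag * ?\<delta> - complex_of_real lam * ?\<delta> * (\<Sum>w\<in>{1..<2*n}. if ?cond w then 1 else 0)"
    unfolding rvec_sandwich[OF z]
    by (subst matrix_elem_cong[OF Hcircuit_string_block[OF n _ _ z]], assumption+)
       (unfold matrix_elem_lincomb diag hops, simp)
  also have "\<dots> = ?\<delta> * (2 * Hxxz n lam z' z)"
    unfolding Hxxz_entry[OF z[THEN strings_bits]] by (simp add: algebra_simps)
  finally show ?thesis by simp
qed

text \<open>Both parts hold for every real lambda; the range 0 <= lambda <= 1 is where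
  sqrt(1 - lambda^2) is the intended coefficient of H_init.\<close>

theorem mainTheorem4:
  fixes n :: nat and lam :: real
    and U :: "nat \<times> nat \<Rightarrow> (bool \<times> bool) op"
  assumes "n \<ge> 1"
    and "0 \<le> lam" and "lam \<le> 1"
    and "\<forall>p\<in>plaqs n. unitary2 (U p)"
  shows "(\<forall>x\<in>bits n. \<forall>x'\<in>bits n. \<forall>z\<in>strings n. \<forall>z'\<in>strings n.
            sandwich (cfgs n) (rvec n U x' z')
              (\<lambda>c' c. Hcircuit n lam U c' c - complex_of_real (sqrt (1 - lam\<^sup>2)) * idop c' c)
              (rvec n U x z)
            = 2 * (if x' = x then 1 else 0) * Hxxz n lam z' z)
       \<and> (\<forall>\<psi>\<in>Sstring n. apply_op (cfgs n) (Hcircuit n lam U) \<psi> \<in> Sstring n)"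
  using rotated_entry[OF assms(1,4)] Hcircuit_preserves_Sstring[OF assms(1)] by blast

end
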